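(* Let $M$ be a paving matroid of rank $r \ge 3$, let $S = \{s_1,\dots,s_r\}$ be a basis of $M$, and let $e_1 e_2\cdots e_m$ (with $m \ge r$) be a cyclic ordering of $M\backslash S$, i.e., any $r$ cyclically consecutive elements form a basis of $M$. Suppose that for every $i \in \{1,\dots,m\}$ and every permutation $\pi$ of $\{1,\dots,r\}$, the sequence $e_1\cdots e_i\, s_{\pi(1)}\cdots s_{\pi(r)}\, e_{i+1}\cdots e_m$ is not a cyclic ordering of $M$. Fix $j \in \{1,\dots,m\}$, let $x_t = e_{j-t}$ and $y_t = e_{j+t-1}$ for $t = 1,\dots,r-1$ (indices taken modulo $m$ in $\{1,\dots,m\}$). Let $\mathcal{H}_1$ be the set of all $C \cap S$ where $C$ is a circuit of $M$ with $|C| = r$ and $\{x_1,\dots,x_i\} \subset C \subseteq \{x_1,\dots,x_i\} \cup S$ for some $i \in \{1,\dots,r-1\}$, and let $\mathcal{H}_2$ be the set of all $C\cap S$ where $C$ is a circuit with $|C|=r$ and $\{y_1,\dots,y_i\} \subset C \subseteq \{y_1,\dots,y_i\}\cup S$ for some $i\in\{1,\dots,r-1\}$. Then $(\mathcal{H}_1,\mathcal{H}_2)$ is an $S$-pair which is order consistent with respect to $S$.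
   Context: A matroid $M$ of rank $r$ is a paving matroid if every circuit has at least $r$ elements. Let $S$ be a finite nonempty set and $\mathcal{S}_1, \mathcal{S}_2 \subseteq 2^S$. The pair $(\mathcal{S}_1,\mathcal{S}_2)$ is an $S$-pair if: (S1) for $i=1,2$, if $A,B \in \mathcal{S}_i$ with $B \subset A$ and $|A| = |B|+1$, then every $|B|$-element subset of $A$ lies in $\mathcal{S}_i$; (S2) for $i=1,2$, if $A,B \in \mathcal{S}_i$ with $|A|=|B|$ and $|A\cap B| = |A|-1$, then $A\cup B \in \mathcal{S}_i$; (S3) for $i=1,2$, not every singleton $\{s\}$, $s\in S$, lies in $\mathcal{S}_i$, and $S \notin \mathcal{S}_i$; (S4) for $k = 1,\dots,|S|-1$ and $x\in S$, if every $k$-element subset of $S - x$ lies in $\mathcal{S}_1$, then not every $(|S|-k)$-element subset of $S-x$ lies in $\mathcal{S}_2$. The pair $(\mathcal{S}_1,\mathcal{S}_2)$ is order consistent with respect to $S$ (where $|S|=n$) if for every ordering $s_1 s_2\cdots s_n$ of $S$ there exists $i\in\{1,\dots,n\}$ such that $\{s_1,\dots,s_i\} \in \mathcal{S}_1$ or $\{s_i,\dots,s_n\} \in \mathcal{S}_2$. *)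

theory Defs
  imports Main
begin

definition matroid :: "'a set \<Rightarrow> ('a set \<Rightarrow> bool) \<Rightarrow> bool" where
  "matroid E indep \<longleftrightarrow> finite E
     \<and> (\<forall>X. indep X \<longrightarrow> X \<subseteq> E)
     \<and> indep {}
     \<and> (\<forall>X Y. indep X \<longrightarrow> Y \<subseteq> X \<longrightarrow> indep Y)
     \<and> (\<forall>X Y. indep X \<longrightarrow> indep Y \<longrightarrow> card X < card Y \<longrightarrow>
            (\<exists>y\<in>Y - X. indep (insert y X)))"

definition basis :: "'a set \<Rightarrow> ('a set \<Rightarrow> bool) \<Rightarrow> 'a set \<Rightarrow> bool" where
  "basis E indep B \<longleftrightarrow> B \<subseteq> E \<and> indep B \<and> (\<forall>X. X \<subseteq> E \<longrightarrow> indep X \<longrightarrow> B \<subseteq> X \<longrightarrow> X = B)"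

definition circuit :: "'a set \<Rightarrow> ('a set \<Rightarrow> bool) \<Rightarrow> 'a set \<Rightarrow> bool" where
  "circuit E indep C \<longleftrightarrow> C \<subseteq> E \<and> \<not> indep C \<and> (\<forall>D. D \<subset> C \<longrightarrow> indep D)"

definition mrank :: "'a set \<Rightarrow> ('a set \<Rightarrow> bool) \<Rightarrow> nat" where
  "mrank E indep = Max {card X | X. X \<subseteq> E \<and> indep X}"

definition paving :: "'a set \<Rightarrow> ('a set \<Rightarrow> bool) \<Rightarrow> bool" where
  "paving E indep \<longleftrightarrow> matroid E indep \<and>
     (\<forall>C. circuit E indep C \<longrightarrow> card C \<ge> mrank E indep)"

definition cyc_window :: "'a list \<Rightarrow> nat \<Rightarrow> nat \<Rightarrow> 'a set" where
  "cyc_window xs r k = {xs ! ((k + t) mod length xs) | t. t < r}"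

definition cyclic_arrangement :: "'a set \<Rightarrow> ('a set \<Rightarrow> bool) \<Rightarrow> 'a list \<Rightarrow> bool" where
  "cyclic_arrangement E indep xs \<longleftrightarrow> distinct xs \<and>
     (\<forall>k < length xs. basis E indep (cyc_window xs (mrank E indep) k))"

definition cyclic_ordering :: "'a set \<Rightarrow> ('a set \<Rightarrow> bool) \<Rightarrow> 'a list \<Rightarrow> bool" where
  "cyclic_ordering E indep xs \<longleftrightarrow> set xs = E \<and> cyclic_arrangement E indep xs"

text \<open>1-based cyclic indexing: e_k for integer k, index taken modulo m in {1..m}.\<close>
definition cyc_nth :: "'a list \<Rightarrow> int \<Rightarrow> 'a" where
  "cyc_nth xs k = xs ! nat ((k - 1) mod int (length xs))"

definition S_pair :: "'a set \<Rightarrow> 'a set set \<Rightarrow> 'a set set \<Rightarrow> bool" where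
  "S_pair S S1 S2 \<longleftrightarrow> finite S \<and> S \<noteq> {} \<and> S1 \<subseteq> Pow S \<and> S2 \<subseteq> Pow S \<and>
    (\<forall>F\<in>{S1, S2}.
       (\<forall>A\<in>F. \<forall>B\<in>F. B \<subset> A \<and> card A = card B + 1 \<longrightarrow>
            (\<forall>D. D \<subseteq> A \<and> card D = card B \<longrightarrow> D \<in> F))
     \<and> (\<forall>A\<in>F. \<forall>B\<in>F. card A = card B \<and> card (A \<inter> B) = card A - 1 \<longrightarrow> A \<union> B \<in> F)
     \<and> \<not> (\<forall>s\<in>S. {s} \<in> F) \<and> S \<notin> F)
   \<and> (\<forall>k \<in> {1..card S - 1}. \<forall>x\<in>S.
       (\<forall>D. D \<subseteq> S - {x} \<and> card D = k \<longrightarrow> D \<in> S1) \<longrightarrow>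
       \<not> (\<forall>D. D \<subseteq> S - {x} \<and> card D = card S - k \<longrightarrow> D \<in> S2))"

definition order_consistent :: "'a set \<Rightarrow> 'a set set \<Rightarrow> 'a set set \<Rightarrow> bool" where
  "order_consistent S S1 S2 \<longleftrightarrow>
    (\<forall>ps. distinct ps \<and> set ps = S \<longrightarrow>
       (\<exists>i\<in>{1..length ps}. set (take i ps) \<in> S1 \<or> set (drop (i - 1) ps) \<in> S2))"

end

theory Submission
  imports Defs
begin

text \<open>
  Rotate \<open>es\<close> so that \<open>e\<^sub>j\<close> comes first, giving a list \<open>Q\<close>: then \<open>x\<^sub>t\<close> and \<open>y\<^sub>t\<close> are the
  \<open>t\<close>-th entries of \<open>rev Q\<close> and of \<open>Q\<close>. For any injective sequence \<open>f\<close> outside the basis \<open>S\<close>,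
  a set \<open>D \<subseteq> S\<close> with \<open>1 \<le> |D| \<le> r - 1\<close> is the trace \<open>C \<inter> S\<close> of an \<open>r\<close>-circuit through
  \<open>f\<^sub>1, \<dots>, f\<^bsub>r-|D|\<^esub>\<close> iff these elements together with \<open>D\<close> are dependent: in a paving matroid
  smaller sets are independent and dependent \<open>r\<close>-sets are circuits. Conditions (S1) and (S2)
  then follow from a single exchange: if \<open>a\<close> and \<open>b\<close> both depend on an independent set \<open>Z\<close>,
  then so does \<open>Z - t + a + b\<close> for \<open>t \<in> Z\<close>. For (S3), \<open>f\<^sub>1, \<dots>, f\<^bsub>r-1\<^esub>\<close> is augmented from \<open>S\<close>.
  For (S4), \<open>S - x\<close> is augmented from the basis \<open>x\<^sub>1, \<dots>, x\<^bsub>r-k\<^esub>, y\<^sub>1, \<dots>, y\<^sub>k\<close> (a cyclic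
  window of \<open>es\<close>); augmenting the \<open>x\<close>-part or the \<open>y\<close>-part back from the resulting basis yields a
  \<open>k\<close>-subset of \<open>S - x\<close> outside \<open>H1\<close> or an \<open>(r - k)\<close>-subset outside \<open>H2\<close>.
  Order consistency: if an ordering of \<open>S\<close> had no prefix in \<open>H1\<close> and no suffix in \<open>H2\<close>, every
  window of that ordering followed by \<open>Q\<close> would be a basis, so inserting \<open>S\<close> into \<open>es\<close> would
  give a cyclic ordering of the matroid.
\<close>

section \<open>Matroids\<close>

lemma card_Suc_subset_obtains_Diff:
  assumes "finite A" "B \<subseteq> A" "card A = Suc (card B)"
  obtains a where "a \<in> A" "B = A - {a}"
proof -
  have "card (A - B) = 1" using assms by (simp add: card_Diff_subset finite_subset)
  then obtain a where "A - B = {a}" by (rule card_1_singletonE)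
  with assms(2) that show thesis by blast
qed

lemma
  assumes "matroid E indep"
  shows matroid_finite: "finite E"
    and matroid_indep_subset_ground: "indep X \<Longrightarrow> X \<subseteq> E"
    and matroid_indep_subset: "indep X \<Longrightarrow> Y \<subseteq> X \<Longrightarrow> indep Y"
    and matroid_augment:
      "indep X \<Longrightarrow> indep Y \<Longrightarrow> card X < card Y \<Longrightarrow> \<exists>y\<in>Y - X. indep (insert y X)"
  using assms unfolding matroid_def by simp_all

lemma matroid_indep_finite: "matroid E indep \<Longrightarrow> indep X \<Longrightarrow> finite X"
  using finite_subset matroid_finite matroid_indep_subset_ground by metis

lemma matroid_augment_by:
  assumes "matroid E indep" "indep X" "indep Y" "card X + d \<le> card Y"
  shows "\<exists>D\<subseteq>Y - X. card D = d \<and> indep (X \<union> D)"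
  using assms(4)
proof (induction d)
  case 0
  show ?case using assms(2) by (intro exI[of _ "{}"]) simp
next
  case (Suc d)
  then obtain D where D: "D \<subseteq> Y - X" "card D = d" "indep (X \<union> D)" by auto
  have "finite (X \<union> D)" using D(3) matroid_indep_finite[OF assms(1)] by blast
  then have "card (X \<union> D) = card X + d" using D(1,2) by (subst card_Un_disjoint) auto
  then obtain u where "u \<in> Y - (X \<union> D)" "indep (insert u (X \<union> D))"
    using matroid_augment[OF assms(1) D(3) assms(3)] Suc.prems by auto
  with D \<open>finite (X \<union> D)\<close> show ?case by (intro exI[of _ "insert u D"]) auto
qed

text \<open>Augmenting \<open>Z\<close> from the larger set on the right could only add \<open>a\<close> or \<open>b\<close>.\<close>
lemma matroid_dependent_exchange:
  assumes "matroid E indep" "indep Z" "\<not> indep (insert a Z)" "\<not> indep (insert b Z)"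
    and "a \<notin> Z" "b \<notin> Z" "a \<noteq> b" "t \<in> Z"
  shows "\<not> indep (insert a (insert b (Z - {t})))"
proof
  assume indep_ab: "indep (insert a (insert b (Z - {t})))"
  have "finite Z" using matroid_indep_finite[OF assms(1,2)] .
  moreover have "card Z > 0" using \<open>finite Z\<close> assms(8) card_gt_0_iff by blast
  ultimately have "card (insert a (insert b (Z - {t}))) = Suc (card Z)"
    using assms(5-8) by (simp add: card_Diff_singleton)
  then obtain u where "u \<in> insert a (insert b (Z - {t})) - Z" "indep (insert u Z)"
    using matroid_augment[OF assms(1,2) indep_ab] by auto
  with assms(3,4) show False by auto
qed

lemma card_le_mrank:
  assumes "matroid E indep" "X \<subseteq> E" "indep X"
  shows "card X \<le> mrank E indep"
proof -
  have "{card X | X. X \<subseteq> E \<and> indep X} \<subseteq> card ` Pow E" by auto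
  then have "finite {card X | X. X \<subseteq> E \<and> indep X}"
    using matroid_finite[OF assms(1)] finite_subset by blast
  moreover have "card X \<in> {card X | X. X \<subseteq> E \<and> indep X}" using assms(2,3) by blast
  ultimately show ?thesis unfolding mrank_def by (rule Max_ge)
qed

lemma basis_if_card_mrank:
  assumes "matroid E indep" "X \<subseteq> E" "indep X" "card X = mrank E indep"
  shows "basis E indep X"
  unfolding basis_def
proof (intro conjI allI impI)
  fix Y assume Y: "Y \<subseteq> E" "indep Y" "X \<subseteq> Y"
  have "finite Y" using matroid_indep_finite[OF assms(1) Y(2)] .
  moreover have "card Y \<le> card X" using card_le_mrank[OF assms(1) Y(1,2)] assms(4) by simp
  ultimately show "Y = X" using Y(3) card_seteq by blast
qed (use assms in auto)

lemma matroid_dependent_contains_circuit: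
  assumes "matroid E indep" "X \<subseteq> E" "\<not> indep X"
  shows "\<exists>C\<subseteq>X. circuit E indep C"
  using assms(2,3)
proof (induction "card X" arbitrary: X rule: less_induct)
  case less
  show ?case
  proof (cases "\<forall>D. D \<subset> X \<longrightarrow> indep D")
    case True
    with less.prems show ?thesis by (auto simp: circuit_def)
  next
    case False
    then obtain D where D: "D \<subset> X" "\<not> indep D" by blast
    have "finite X" using less.prems(1) matroid_finite[OF assms(1)] by (rule finite_subset)
    then have "card D < card X" using D(1) by (rule psubset_card_mono)
    with less.hyps D less.prems(1) show ?thesis by (meson order.trans psubset_imp_subset)
  qed
qed

lemma paving_indep_if_card_less:
  assumes "paving E indep" "X \<subseteq> E" "card X < mrank E indep"
  shows "indep X"
proof (rule ccontr)
  assume "\<not> indep X"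
  have matroid: "matroid E indep" using assms(1) unfolding paving_def by simp
  obtain C where C: "C \<subseteq> X" "circuit E indep C"
    using matroid_dependent_contains_circuit[OF matroid assms(2) \<open>\<not> indep X\<close>] by blast
  have "finite X" using assms(2) matroid_finite[OF matroid] by (rule finite_subset)
  then have "card C \<le> card X" using C(1) by (rule card_mono)
  moreover have "mrank E indep \<le> card C" using assms(1) C(2) unfolding paving_def by simp
  ultimately show False using assms(3) by simp
qed

lemma paving_circuit_if_card_mrank:
  assumes "paving E indep" "X \<subseteq> E" "card X = mrank E indep" "\<not> indep X"
  shows "circuit E indep X"
  unfolding circuit_def
proof (intro conjI allI impI)
  have "matroid E indep" using assms(1) unfolding paving_def by simp
  then have "finite X" using assms(2) matroid_finite by (metis finite_subset)
  fix D assume "D \<subset> X"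
  then have "card D < mrank E indep" using psubset_card_mono[OF \<open>finite X\<close>] assms(3) by simp
  then show "indep D" using paving_indep_if_card_less[OF assms(1)] \<open>D \<subset> X\<close> assms(2) by blast
qed (use assms in auto)

section \<open>Cyclic windows of lists\<close>

lemma image_nth_pred_atLeastAtMost:
  assumes "i \<le> length xs"
  shows "(\<lambda>t. xs ! (t - 1)) ` {1..i} = set (take i xs)"
proof -
  have "{1..i} = Suc ` {0..<i}"
    by (simp add: image_Suc_atLeastLessThan atLeastLessThanSuc_atLeastAtMost)
  then have "(\<lambda>t. xs ! (t - 1)) ` {1..i} = (!) xs ` {0..<i}"
    by (simp only: image_image diff_Suc_1)
  with assms show ?thesis by (simp add: nth_image)
qed

lemma inj_on_nth_pred_atLeastAtMost:
  assumes "distinct xs" "i \<le> length xs"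
  shows "inj_on (\<lambda>t. xs ! (t - 1)) {1..i}"
  using assms by (auto simp: inj_on_def nth_eq_iff_index_eq)

lemma cyc_window_eq_set_take_rotate:
  assumes "r \<le> length xs"
  shows "cyc_window xs r k = set (take r (rotate k xs))"
proof -
  have "cyc_window xs r k = (\<lambda>t. rotate k xs ! t) ` {0..<r}"
    using assms unfolding cyc_window_def by (auto simp: nth_rotate)
  with assms show ?thesis by (simp add: nth_image)
qed

lemma cyc_window_conv_drop_take:
  assumes "r \<le> length xs" "k < length xs"
  shows "cyc_window xs r k = set (take r (drop k xs)) \<union> set (take (r + k - length xs) xs)"
proof -
  have "r + k - length xs \<le> k" using assms(1) by linarith
  with assms show ?thesis by (simp add: cyc_window_eq_set_take_rotate rotate_drop_take min_def)
qed

lemma cyc_window_append_head: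
  assumes "length ps = r" "r \<le> length Q" "k \<le> r"
  shows "cyc_window (ps @ Q) r k = set (drop k ps) \<union> set (take k Q)"
proof (cases "k < r + length Q")
  case True
  with assms show ?thesis by (simp add: cyc_window_conv_drop_take)
next
  case False
  with assms have "r = 0" "k = 0" by auto
  with assms(1) show ?thesis unfolding cyc_window_def by simp
qed

lemma cyc_window_append_middle:
  assumes "length ps = r" "r \<le> k" "k \<le> length Q" "k < r + length Q"
  shows "cyc_window (ps @ Q) r k = cyc_window Q r (k - r)"
  using assms by (simp add: cyc_window_conv_drop_take)

lemma cyc_window_append_tail:
  assumes "length ps = r" "r \<le> length Q" "length Q \<le> k" "k < r + length Q"
  shows "cyc_window (ps @ Q) r k = set (drop (k - r) Q) \<union> set (take (k - length Q) ps)"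
  using assms by (simp add: cyc_window_conv_drop_take)

lemma card_cyc_window:
  assumes "distinct xs" "r \<le> length xs"
  shows "card (cyc_window xs r k) = r"
  using assms by (simp add: cyc_window_eq_set_take_rotate distinct_card)

lemma cyc_window_subset: "r \<le> length xs \<Longrightarrow> cyc_window xs r k \<subseteq> set xs"
  by (metis cyc_window_eq_set_take_rotate set_rotate set_take_subset)

lemma cyclic_arrangement_rotate:
  assumes "cyclic_arrangement E indep xs" "mrank E indep \<le> length xs"
  shows "cyclic_arrangement E indep (rotate c xs)"
  unfolding cyclic_arrangement_def
proof (intro conjI allI impI)
  show "distinct (rotate c xs)" using assms(1) unfolding cyclic_arrangement_def by simp
  fix k assume "k < length (rotate c xs)"
  then have "xs \<noteq> []" by auto
  then have "(k + c) mod length xs < length xs" by simp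
  then have "basis E indep (cyc_window xs (mrank E indep) ((k + c) mod length xs))"
    using assms(1) unfolding cyclic_arrangement_def by blast
  moreover have "rotate k (rotate c xs) = rotate ((k + c) mod length xs) xs"
    unfolding rotate_rotate by (rule rotate_conv_mod)
  ultimately show "basis E indep (cyc_window (rotate c xs) (mrank E indep) k)"
    using assms(2) by (simp add: cyc_window_eq_set_take_rotate)
qed

lemma cyclic_ordering_rotate:
  "cyclic_ordering E indep xs \<Longrightarrow> mrank E indep \<le> length xs \<Longrightarrow> cyclic_ordering E indep (rotate c xs)"
  unfolding cyclic_ordering_def using cyclic_arrangement_rotate by auto

lemma insertion_eq_rotate:
  assumes "i \<le> length xs"
  shows "take i xs @ ys @ drop i xs = rotate (length ys + length xs - i) (ys @ rotate i xs)"
proof -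
  have "rotate i xs = drop i xs @ take i xs"
    using assms by (cases "i = length xs") (simp_all add: rotate_drop_take)
  then show ?thesis using assms rotate_append[of "ys @ drop i xs" "take i xs"] by simp
qed

lemma cyc_nth_eq_nth_rotate:
  assumes "xs \<noteq> []"
  shows "cyc_nth xs (int c + 1 + k) = rotate c xs ! nat (k mod int (length xs))"
proof -
  define n where "n = nat (k mod int (length xs))"
  have "int n = k mod int (length xs)" using assms unfolding n_def by simp
  then have "int ((c + n) mod length xs) = (int c + k) mod int (length xs)"
    by (simp add: of_nat_mod mod_add_right_eq)
  then have "(c + n) mod length xs = nat ((int c + k) mod int (length xs))" by linarith
  moreover have "n < length xs" using assms unfolding n_def by (simp add: nat_less_iff)
  ultimately show ?thesis unfolding cyc_nth_def n_def by (simp add: nth_rotate)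
qed

lemma cyc_nth_backward:
  assumes "1 \<le> j" "1 \<le> t" "t \<le> length xs"
  shows "cyc_nth xs (int j - int t) = rev (rotate (j - 1) xs) ! (t - 1)"
proof -
  have ne: "xs \<noteq> []" using assms by auto
  have "cyc_nth xs (int j - int t) = cyc_nth xs (int (j - 1) + 1 + - int t)"
    using assms(1) by (simp add: of_nat_diff)
  also have "\<dots> = rotate (j - 1) xs ! nat (- int t mod int (length xs))"
    by (rule cyc_nth_eq_nth_rotate[OF ne])
  also have "nat (- int t mod int (length xs)) = length xs - t"
  proof (cases "t = length xs")
    case False
    then have "t < length xs" using assms(3) by simp
    then have "int t mod int (length xs) = int t" by (simp add: of_nat_mod[symmetric])
    then have "- int t mod int (length xs) = int (length xs) - int t"
      using assms(2) by (simp add: zmod_zminus1_eq_if)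
    then show ?thesis by simp
  qed simp
  also have "rotate (j - 1) xs ! (length xs - t) = rev (rotate (j - 1) xs) ! (t - 1)"
    using assms(2,3) by (simp add: rev_nth)
  finally show ?thesis .
qed

lemma cyc_nth_forward:
  assumes "1 \<le> j" "1 \<le> t" "t \<le> length xs"
  shows "cyc_nth xs (int j + int t - 1) = rotate (j - 1) xs ! (t - 1)"
proof -
  have ne: "xs \<noteq> []" using assms by auto
  have "cyc_nth xs (int j + int t - 1) = cyc_nth xs (int (j - 1) + 1 + int (t - 1))"
    using assms(1,2) by (simp add: of_nat_diff algebra_simps)
  also have "\<dots> = rotate (j - 1) xs ! nat (int (t - 1) mod int (length xs))"
    by (rule cyc_nth_eq_nth_rotate[OF ne])
  also have "nat (int (t - 1) mod int (length xs)) = t - 1"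
    using assms(2,3) by (simp add: of_nat_mod[symmetric])
  finally show ?thesis .
qed

lemma exists_insertion_eq_rotate:
  assumes "1 \<le> j" "j \<le> length xs"
  shows "\<exists>i\<in>{1..length xs}. \<exists>n. take i xs @ ys @ drop i xs = rotate n (ys @ rotate (j - 1) xs)"
proof -
  define i where "i = (if j = 1 then length xs else j - 1)"
  have "i \<in> {1..length xs}" using assms unfolding i_def by auto
  moreover have "rotate i xs = rotate (j - 1) xs"
    using assms unfolding i_def by (auto simp: rotate_conv_mod[of "length xs"])
  ultimately show ?thesis using insertion_eq_rotate[of i xs ys] by auto
qed

section \<open>Traces of circuits on the basis\<close>

text \<open>Conditions (S1)--(S3) of an \<open>S\<close>-pair, for one of its two families.\<close>
definition S_pair_component :: "'a set \<Rightarrow> 'a set set \<Rightarrow> bool" where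
  "S_pair_component S F \<longleftrightarrow>
     (\<forall>A\<in>F. \<forall>B\<in>F. B \<subset> A \<and> card A = card B + 1 \<longrightarrow>
        (\<forall>D. D \<subseteq> A \<and> card D = card B \<longrightarrow> D \<in> F))
   \<and> (\<forall>A\<in>F. \<forall>B\<in>F. card A = card B \<and> card (A \<inter> B) = card A - 1 \<longrightarrow> A \<union> B \<in> F)
   \<and> \<not> (\<forall>s\<in>S. {s} \<in> F) \<and> S \<notin> F"

lemma S_pair_iff:
  "S_pair S S1 S2 \<longleftrightarrow> finite S \<and> S \<noteq> {} \<and> S1 \<subseteq> Pow S \<and> S2 \<subseteq> Pow S \<and>
     S_pair_component S S1 \<and> S_pair_component S S2 \<and>
     (\<forall>k \<in> {1..card S - 1}. \<forall>x\<in>S.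
       (\<forall>D. D \<subseteq> S - {x} \<and> card D = k \<longrightarrow> D \<in> S1) \<longrightarrow>
       \<not> (\<forall>D. D \<subseteq> S - {x} \<and> card D = card S - k \<longrightarrow> D \<in> S2))"
  unfolding S_pair_def S_pair_component_def by simp

definition circuit_traces ::
    "'a set \<Rightarrow> ('a set \<Rightarrow> bool) \<Rightarrow> 'a set \<Rightarrow> nat \<Rightarrow> (nat \<Rightarrow> 'a) \<Rightarrow> 'a set set" where
  "circuit_traces E indep S r f = {C \<inter> S | C. circuit E indep C \<and> card C = r \<and>
      (\<exists>i\<in>{1..r-1}. f ` {1..i} \<subset> C \<and> C \<subseteq> f ` {1..i} \<union> S)}"

lemma circuit_traces_cong:
  assumes "\<And>t. t \<in> {1..r-1} \<Longrightarrow> f t = g t"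
  shows "circuit_traces E indep S r f = circuit_traces E indep S r g"
proof -
  have "(\<exists>i\<in>{1..r-1}. f ` {1..i} \<subset> C \<and> C \<subseteq> f ` {1..i} \<union> S) \<longleftrightarrow>
        (\<exists>i\<in>{1..r-1}. g ` {1..i} \<subset> C \<and> C \<subseteq> g ` {1..i} \<union> S)" for C
  proof (rule bex_cong)
    fix i assume "i \<in> {1..r-1}"
    then have "f ` {1..i} = g ` {1..i}" using assms by (intro image_cong) auto
    then show "f ` {1..i} \<subset> C \<and> C \<subseteq> f ` {1..i} \<union> S \<longleftrightarrow> g ` {1..i} \<subset> C \<and> C \<subseteq> g ` {1..i} \<union> S"
      by simp
  qed simp
  then show ?thesis unfolding circuit_traces_def by simp
qed

locale paving_basis =
  fixes E :: "'a set" and indep :: "'a set \<Rightarrow> bool" and S :: "'a set" and r :: nat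
  assumes paving: "paving E indep"
    and mrank_eq: "mrank E indep = r"
    and rank_pos: "0 < r"
    and basis_S: "basis E indep S"
    and card_S: "card S = r"
begin

lemma matroid: "matroid E indep"
  using paving unfolding paving_def by simp

lemma S_subset: "S \<subseteq> E" and indep_S: "indep S"
  using basis_S unfolding basis_def by simp_all

lemma finite_S: "finite S"
  using S_subset matroid_finite[OF matroid] by (rule finite_subset)

lemma indep_if_card_less_rank: "X \<subseteq> E \<Longrightarrow> card X < r \<Longrightarrow> indep X"
  using paving_indep_if_card_less[OF paving] mrank_eq by simp

end

locale outside_sequence = paving_basis +
  fixes f :: "nat \<Rightarrow> 'a"
  assumes inj_on_f: "inj_on f {1..r-1}"
    and f_outside: "f ` {1..r-1} \<subseteq> E - S"
begin

lemma card_f_prefix: "i \<le> r - 1 \<Longrightarrow> card (f ` {1..i}) = i"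
  using inj_on_subset[OF inj_on_f] by (simp add: card_image)

lemma f_prefix_outside: "i \<le> r - 1 \<Longrightarrow> f ` {1..i} \<subseteq> E - S"
  using f_outside by fastforce

lemma f_prefix_Suc: "f ` {1..Suc i} = insert (f (Suc i)) (f ` {1..i})"
  by (simp add: atLeastAtMostSuc_conv)

lemma f_Suc_outside_prefix:
  assumes "Suc i \<le> r - 1"
  shows "f (Suc i) \<notin> f ` {1..i} \<union> S"
proof -
  have "f (Suc i) \<notin> f ` {1..i}"
  proof
    assume "f (Suc i) \<in> f ` {1..i}"
    then obtain u where u: "u \<in> {1..i}" "f (Suc i) = f u" by auto
    then have "Suc i = u" using inj_onD[OF inj_on_f u(2)] assms by simp
    with u(1) show False by simp
  qed
  moreover have "Suc i \<in> {1..r-1}" using assms by simp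
  then have "f (Suc i) \<notin> S" using f_outside by blast
  ultimately show ?thesis by simp
qed

lemma card_f_prefix_Un:
  assumes "i \<le> r - 1" "B \<subseteq> S"
  shows "card (f ` {1..i} \<union> B) = i + card B"
proof -
  have "f ` {1..i} \<inter> B = {}" using f_prefix_outside[OF assms(1)] assms(2) by blast
  moreover have "finite B" using assms(2) finite_S by (rule finite_subset)
  ultimately show ?thesis using card_f_prefix[OF assms(1)] by (simp add: card_Un_disjoint)
qed

lemma indep_f_prefix_Un:
  assumes "B \<subseteq> S" "i + card B < r"
  shows "indep (f ` {1..i} \<union> B)"
proof (rule indep_if_card_less_rank)
  have "i \<le> r - 1" using assms(2) by linarith
  then show "f ` {1..i} \<union> B \<subseteq> E" using f_prefix_outside assms(1) S_subset by blast
  show "card (f ` {1..i} \<union> B) < r" using card_f_prefix_Un[OF \<open>i \<le> r - 1\<close> assms(1)] assms(2) by simp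
qed

text \<open>The circuit with trace \<open>D\<close> is \<open>f ` {1..r - card D} \<union> D\<close>, and in a paving matroid every
  dependent set of size \<open>r\<close> is a circuit.\<close>
lemma mem_circuit_traces_iff:
  "D \<in> circuit_traces E indep S r f \<longleftrightarrow>
     D \<subseteq> S \<and> card D \<in> {1..r-1} \<and> \<not> indep (f ` {1..r - card D} \<union> D)"
proof
  assume "D \<in> circuit_traces E indep S r f"
  then obtain C i where C: "D = C \<inter> S" "circuit E indep C" "card C = r" "i \<in> {1..r-1}"
      "f ` {1..i} \<subset> C" "C \<subseteq> f ` {1..i} \<union> S"
    unfolding circuit_traces_def by blast
  have "f ` {1..i} \<inter> S = {}" using f_prefix_outside C(4) by auto
  then have C_eq: "C = f ` {1..i} \<union> D" using C(1,5,6) by blast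
  have D_S: "D \<subseteq> S" using C(1) by blast
  then have "r = i + card D" using C(3,4) C_eq card_f_prefix_Un by simp
  then have "card D \<in> {1..r-1}" "r - card D = i" using C(4) by auto
  moreover have "\<not> indep C" using C(2) unfolding circuit_def by simp
  ultimately show "D \<subseteq> S \<and> card D \<in> {1..r-1} \<and> \<not> indep (f ` {1..r - card D} \<union> D)"
    using C_eq D_S by simp
next
  assume "D \<subseteq> S \<and> card D \<in> {1..r-1} \<and> \<not> indep (f ` {1..r - card D} \<union> D)"
  then have D_S: "D \<subseteq> S" and card_D: "card D \<in> {1..r-1}"
    and dep: "\<not> indep (f ` {1..r - card D} \<union> D)" by simp_all
  define i where "i = r - card D"
  define C where "C = f ` {1..i} \<union> D"
  have i: "i \<in> {1..r-1}" using card_D unfolding i_def by auto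
  then have i_le: "i \<le> r - 1" by simp
  have "f ` {1..i} \<inter> S = {}" using f_prefix_outside[OF i_le] by blast
  moreover have "D \<noteq> {}" using card_D by auto
  ultimately have "D = C \<inter> S" "f ` {1..i} \<subset> C" "C \<subseteq> f ` {1..i} \<union> S"
    using D_S unfolding C_def by blast+
  moreover have "card C = r"
  proof -
    have "card C = i + card D" unfolding C_def using i_le D_S by (rule card_f_prefix_Un)
    moreover have "card D \<le> r" using card_D by (meson atLeastAtMost_iff diff_le_self le_trans)
    ultimately show ?thesis unfolding i_def by simp
  qed
  moreover have "circuit E indep C"
  proof (rule paving_circuit_if_card_mrank[OF paving])
    show "C \<subseteq> E" using D_S f_prefix_outside[OF i_le] S_subset unfolding C_def by blast
    show "card C = mrank E indep" using \<open>card C = r\<close> mrank_eq by simp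
    show "\<not> indep C" using dep unfolding C_def i_def .
  qed
  ultimately show "D \<in> circuit_traces E indep S r f"
    unfolding circuit_traces_def using i by (intro CollectI exI[of _ C]) blast
qed

lemma
  assumes "D \<in> circuit_traces E indep S r f"
  shows circuit_trace_subset: "D \<subseteq> S"
    and circuit_trace_card: "card D \<in> {1..r-1}"
    and circuit_trace_dependent: "\<not> indep (f ` {1..r - card D} \<union> D)"
  using assms unfolding mem_circuit_traces_iff by blast+

lemma indep_if_notin_circuit_traces:
  "D \<subseteq> S \<Longrightarrow> card D \<in> {1..r-1} \<Longrightarrow> D \<notin> circuit_traces E indep S r f \<Longrightarrow>
    indep (f ` {1..r - card D} \<union> D)"
  using mem_circuit_traces_iff by blast

lemma circuit_traces_subset_Pow: "circuit_traces E indep S r f \<subseteq> Pow S"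
  using mem_circuit_traces_iff by blast

lemma circuit_traces_exchange:
  assumes A: "insert s B \<in> circuit_traces E indep S r f" and B: "B \<in> circuit_traces E indep S r f"
    and "s \<notin> B" "t \<in> B"
  shows "insert s (B - {t}) \<in> circuit_traces E indep S r f"
proof -
  note A_S = circuit_trace_subset[OF A] and card_A = circuit_trace_card[OF A]
    and dep_A = circuit_trace_dependent[OF A]
  note B_S = circuit_trace_subset[OF B] and card_B = circuit_trace_card[OF B]
    and dep_B = circuit_trace_dependent[OF B]
  have "finite B" using B_S finite_S by (rule finite_subset)
  then have card_sB: "card (insert s B) = Suc (card B)" using \<open>s \<notin> B\<close> by simp
  define i where "i = r - card (insert s B)"
  have r_B: "r - card B = Suc i" and Suc_i: "Suc i \<le> r - 1" and "i + card B < r"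
    using card_A card_B card_sB unfolding i_def by auto
  have f_i: "f ` {1..i} \<subseteq> E - S" using Suc_i by (intro f_prefix_outside) simp
  define Z where "Z = f ` {1..i} \<union> B"
  have "insert s Z = f ` {1..r - card (insert s B)} \<union> insert s B" unfolding Z_def i_def by blast
  then have dep_sZ: "\<not> indep (insert s Z)" using dep_A by simp
  have "indep Z" unfolding Z_def using B_S \<open>i + card B < r\<close> by (rule indep_f_prefix_Un)
  moreover note dep_sZ
  moreover have "\<not> indep (insert (f (Suc i)) Z)"
    using dep_B unfolding Z_def r_B f_prefix_Suc by simp
  moreover have "s \<notin> Z" "f (Suc i) \<notin> Z" "s \<noteq> f (Suc i)"
    using \<open>s \<notin> B\<close> A_S B_S f_i f_Suc_outside_prefix[OF Suc_i] unfolding Z_def by auto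
  moreover have "t \<in> Z" using \<open>t \<in> B\<close> unfolding Z_def by blast
  ultimately have "\<not> indep (insert s (insert (f (Suc i)) (Z - {t})))"
    by (rule matroid_dependent_exchange[OF matroid])
  moreover have "card (insert s (B - {t})) = card B"
    using \<open>finite B\<close> \<open>s \<notin> B\<close> \<open>t \<in> B\<close> card_B by (simp add: card_Diff_singleton)
  moreover have "insert s (insert (f (Suc i)) (Z - {t})) = f ` {1..Suc i} \<union> insert s (B - {t})"
    using \<open>t \<in> B\<close> B_S f_i unfolding Z_def f_prefix_Suc by auto
  moreover have "insert s (B - {t}) \<subseteq> S" using A_S by blast
  ultimately show ?thesis unfolding mem_circuit_traces_iff using card_B r_B by simp
qed

lemma circuit_traces_remove_element:
  assumes A: "A \<in> circuit_traces E indep S r f" and B: "B \<in> circuit_traces E indep S r f"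
    and "B \<subset> A" "card A = card B + 1" "D \<subseteq> A" "card D = card B"
  shows "D \<in> circuit_traces E indep S r f"
proof -
  have "finite A" using circuit_trace_subset[OF A] finite_S by (rule finite_subset)
  obtain s where s: "s \<in> A" "B = A - {s}"
    by (rule card_Suc_subset_obtains_Diff[OF \<open>finite A\<close>, where B = B]) (use assms(3,4) in auto)
  obtain t where t: "t \<in> A" "D = A - {t}"
    by (rule card_Suc_subset_obtains_Diff[OF \<open>finite A\<close>, where B = D]) (use assms(4-6) in auto)
  show ?thesis
  proof (cases "t = s")
    case True
    with s t B show ?thesis by simp
  next
    case False
    have "insert s B = A" "s \<notin> B" "t \<in> B" using s t False by auto
    moreover have "D = insert s (B - {t})" using s t False by auto
    ultimately show ?thesis using circuit_traces_exchange A B by simp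
  qed
qed

lemma circuit_traces_insert_pair:
  assumes A: "insert a W \<in> circuit_traces E indep S r f" and B: "insert b W \<in> circuit_traces E indep S r f"
    and "a \<notin> W" "b \<notin> W" "a \<noteq> b"
  shows "insert a (insert b W) \<in> circuit_traces E indep S r f"
proof -
  note A_S = circuit_trace_subset[OF A] and card_A = circuit_trace_card[OF A]
    and dep_A = circuit_trace_dependent[OF A]
  note B_S = circuit_trace_subset[OF B] and dep_B = circuit_trace_dependent[OF B]
  have W_S: "W \<subseteq> S" using A_S by blast
  then have "finite W" using finite_S by (rule finite_subset)
  then have card_aW: "card (insert a W) = Suc (card W)" "card (insert b W) = Suc (card W)"
    using assms(3,4) by simp_all
  define i where "i = r - card (insert a W) - 1"
  have r_A: "r - Suc (card W) = Suc i" and Suc_i: "Suc i \<le> r - 1" and "Suc i + card W < r"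
    using card_A card_aW unfolding i_def by auto
  define Z where "Z = f ` {1..Suc i} \<union> W"
  have r_aW: "r - card (insert a W) = Suc i" and r_bW: "r - card (insert b W) = Suc i"
    using card_aW r_A by simp_all
  have "insert a Z = f ` {1..r - card (insert a W)} \<union> insert a W" unfolding Z_def r_aW by blast
  then have dep_aZ: "\<not> indep (insert a Z)" using dep_A by simp
  have "insert b Z = f ` {1..r - card (insert b W)} \<union> insert b W" unfolding Z_def r_bW by blast
  then have dep_bZ: "\<not> indep (insert b Z)" using dep_B by simp
  have "indep Z" unfolding Z_def using W_S \<open>Suc i + card W < r\<close> by (rule indep_f_prefix_Un)
  moreover note dep_aZ dep_bZ
  moreover have "a \<notin> Z" "b \<notin> Z"
    using assms(3,4) A_S B_S f_prefix_outside[OF Suc_i] unfolding Z_def by blast+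
  moreover note \<open>a \<noteq> b\<close>
  moreover have "f (Suc i) \<in> Z" unfolding Z_def by simp
  ultimately have dep: "\<not> indep (insert a (insert b (Z - {f (Suc i)})))"
    by (rule matroid_dependent_exchange[OF matroid])
  have "insert a (insert b (Z - {f (Suc i)})) = f ` {1..i} \<union> insert a (insert b W)"
    using A_S B_S f_Suc_outside_prefix[OF Suc_i] unfolding Z_def f_prefix_Suc by auto
  with dep have dep_AB: "\<not> indep (f ` {1..i} \<union> insert a (insert b W))" by simp
  have U_S: "insert a (insert b W) \<subseteq> S" using A_S B_S by blast
  show ?thesis
  proof (cases "i = 0")
    case True
    with dep_AB have "\<not> indep (insert a (insert b W))" by simp
    with matroid_indep_subset[OF matroid indep_S U_S] show ?thesis by contradiction
  next
    case False
    have "card (insert a (insert b W)) = Suc (Suc (card W))"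
      using \<open>finite W\<close> assms(3-5) by simp
    then have "card (insert a (insert b W)) \<in> {1..r-1}" and r_U: "r - card (insert a (insert b W)) = i"
      using r_A False by auto
    moreover have "\<not> indep (f ` {1..r - card (insert a (insert b W))} \<union> insert a (insert b W))"
      unfolding r_U by (rule dep_AB)
    ultimately show ?thesis using U_S unfolding mem_circuit_traces_iff by blast
  qed
qed

lemma circuit_traces_union:
  assumes A: "A \<in> circuit_traces E indep S r f" and B: "B \<in> circuit_traces E indep S r f"
    and "card A = card B" "card (A \<inter> B) = card A - 1"
  shows "A \<union> B \<in> circuit_traces E indep S r f"
proof -
  have fin: "finite A" "finite B"
    using circuit_trace_subset[OF A] circuit_trace_subset[OF B] finite_S by (auto intro: finite_subset)
  define W where "W = A \<inter> B"
  have card_W: "card A = Suc (card W)" "card B = Suc (card W)"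
    using assms(3,4) circuit_trace_card[OF A] unfolding W_def by auto
  obtain a where a: "a \<in> A" "W = A - {a}"
    by (rule card_Suc_subset_obtains_Diff[OF fin(1) _ card_W(1)]) (simp add: W_def)
  obtain b where b: "b \<in> B" "W = B - {b}"
    by (rule card_Suc_subset_obtains_Diff[OF fin(2) _ card_W(2)]) (simp add: W_def)
  have "A = insert a W" "B = insert b W" "a \<notin> W" "b \<notin> W" using a b by auto
  moreover have "a \<noteq> b" using a b unfolding W_def by blast
  ultimately show ?thesis using circuit_traces_insert_pair A B by (simp add: insert_commute)
qed

lemma S_notin_circuit_traces: "S \<notin> circuit_traces E indep S r f"
  using mem_circuit_traces_iff card_S by auto

lemma singleton_notin_circuit_traces: "\<exists>s\<in>S. {s} \<notin> circuit_traces E indep S r f"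
proof -
  define X where "X = f ` {1..r-1}"
  have "indep X" using indep_f_prefix_Un[of "{}" "r - 1"] rank_pos unfolding X_def by simp
  moreover have "card X < card S" using card_f_prefix[of "r - 1"] card_S rank_pos unfolding X_def by simp
  ultimately obtain s where "s \<in> S - X" "indep (insert s X)"
    using matroid_augment[OF matroid _ indep_S] by blast
  then show ?thesis using mem_circuit_traces_iff unfolding X_def by auto
qed

lemma exists_subset_notin_circuit_traces:
  assumes "T \<subseteq> S" "indep (insert z T)" "card (insert z T) = r"
    and "k \<in> {1..r-1}" "z \<in> f ` {1..r-k}"
  shows "\<exists>D\<subseteq>T. card D = k \<and> D \<notin> circuit_traces E indep S r f"
proof -
  define X where "X = f ` {1..r-k}"
  have "r - k \<le> r - 1" "r - k + card {} < r" "k \<le> r" using assms(4) by auto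
  then have "card X = r - k" and indep_X: "indep X"
    using card_f_prefix indep_f_prefix_Un[of "{}"] unfolding X_def by simp_all
  then have "card X + k \<le> card (insert z T)" using assms(3) \<open>k \<le> r\<close> by simp
  from matroid_augment_by[OF matroid indep_X assms(2) this]
  obtain D where D: "D \<subseteq> insert z T - X" "card D = k" "indep (X \<union> D)" by blast
  have "D \<subseteq> T" using D(1) assms(5) unfolding X_def by blast
  moreover have "D \<notin> circuit_traces E indep S r f"
    using D(2,3) unfolding mem_circuit_traces_iff X_def by simp
  ultimately show ?thesis using D(2) by blast
qed

lemma S_pair_component_circuit_traces: "S_pair_component S (circuit_traces E indep S r f)"
  unfolding S_pair_component_def
proof (intro conjI ballI impI allI)
  fix A B D
  assume "A \<in> circuit_traces E indep S r f" "B \<in> circuit_traces E indep S r f"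
    "B \<subset> A \<and> card A = card B + 1" "D \<subseteq> A \<and> card D = card B"
  then show "D \<in> circuit_traces E indep S r f"
    by (elim conjE) (rule circuit_traces_remove_element)
next
  fix A B
  assume "A \<in> circuit_traces E indep S r f" "B \<in> circuit_traces E indep S r f"
    "card A = card B \<and> card (A \<inter> B) = card A - 1"
  then show "A \<union> B \<in> circuit_traces E indep S r f"
    by (elim conjE) (rule circuit_traces_union)
next
  show "\<not> (\<forall>s\<in>S. {s} \<in> circuit_traces E indep S r f)"
    using singleton_notin_circuit_traces by blast
qed (rule S_notin_circuit_traces)

end

locale opposite_sequences =
  f: outside_sequence E indep S r f + g: outside_sequence E indep S r g
  for E :: "'a set" and indep S r and f g :: "nat \<Rightarrow> 'a" +
  assumes indep_window: "k \<in> {1..r-1} \<Longrightarrow> indep (f ` {1..r-k} \<union> g ` {1..k})"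
    and card_window: "k \<in> {1..r-1} \<Longrightarrow> card (f ` {1..r-k} \<union> g ` {1..k}) = r"
begin

lemma circuit_traces_complement:
  assumes k: "k \<in> {1..card S - 1}" and "x \<in> S"
    and all_f: "\<forall>D. D \<subseteq> S - {x} \<and> card D = k \<longrightarrow> D \<in> circuit_traces E indep S r f"
  shows "\<not> (\<forall>D. D \<subseteq> S - {x} \<and> card D = card S - k \<longrightarrow> D \<in> circuit_traces E indep S r g)"
proof
  assume all_g: "\<forall>D. D \<subseteq> S - {x} \<and> card D = card S - k \<longrightarrow> D \<in> circuit_traces E indep S r g"
  define T where "T = S - {x}"
  have k_r: "k \<in> {1..r-1}" using k f.card_S by simp
  have T_S: "T \<subseteq> S" unfolding T_def by blast
  have "finite T" using f.finite_S unfolding T_def by simp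
  have card_T: "card T = r - 1" using \<open>x \<in> S\<close> f.finite_S f.card_S unfolding T_def by simp
  have indep_T: "indep T" using matroid_indep_subset[OF f.matroid f.indep_S T_S] .
  have "card T < card (f ` {1..r-k} \<union> g ` {1..k})"
    using card_window[OF k_r] card_T f.rank_pos by simp
  from matroid_augment[OF f.matroid indep_T indep_window[OF k_r] this]
  obtain z where z: "z \<in> f ` {1..r-k} \<union> g ` {1..k}" "z \<notin> T" "indep (insert z T)" by blast
  have card_zT: "card (insert z T) = r" using z(2) \<open>finite T\<close> card_T f.rank_pos by simp
  show False
  proof (cases "z \<in> f ` {1..r-k}")
    case True
    from f.exists_subset_notin_circuit_traces[OF T_S z(3) card_zT k_r True]
    obtain D where "D \<subseteq> T" "card D = k" "D \<notin> circuit_traces E indep S r f" by blast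
    with all_f show False unfolding T_def by blast
  next
    case False
    moreover have "r - (r - k) = k" using k_r by auto
    ultimately have "z \<in> g ` {1..r - (r - k)}" using z(1) by simp
    moreover have "r - k \<in> {1..r-1}" using k_r by auto
    ultimately obtain D where "D \<subseteq> T" "card D = r - k" "D \<notin> circuit_traces E indep S r g"
      using g.exists_subset_notin_circuit_traces[OF T_S z(3) card_zT] by blast
    with all_g f.card_S show False unfolding T_def by blast
  qed
qed

lemma S_pair_circuit_traces: "S_pair S (circuit_traces E indep S r f) (circuit_traces E indep S r g)"
  unfolding S_pair_iff
proof (intro conjI ballI impI)
  show "S \<noteq> {}" using f.card_S f.rank_pos by auto
next
  fix k x
  assume "k \<in> {1..card S - 1}" "x \<in> S"
    "\<forall>D. D \<subseteq> S - {x} \<and> card D = k \<longrightarrow> D \<in> circuit_traces E indep S r f"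
  then show "\<not> (\<forall>D. D \<subseteq> S - {x} \<and> card D = card S - k \<longrightarrow> D \<in> circuit_traces E indep S r g)"
    by (rule circuit_traces_complement)
qed (fact f.finite_S f.circuit_traces_subset_Pow g.circuit_traces_subset_Pow
    f.S_pair_component_circuit_traces g.S_pair_component_circuit_traces)+

end

section \<open>Order consistency\<close>

locale cyclic_frame = paving_basis +
  fixes Q :: "'a list"
  assumes arrangement_Q: "cyclic_arrangement E indep Q"
    and set_Q: "set Q = E - S"
    and rank_le_length: "r \<le> length Q"
begin

lemma distinct_Q: "distinct Q"
  using arrangement_Q unfolding cyclic_arrangement_def by simp

lemma backward_prefix:
  assumes "i \<le> length Q"
  shows "(\<lambda>t. rev Q ! (t - 1)) ` {1..i} = set (drop (length Q - i) Q)"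
proof -
  have "(\<lambda>t. rev Q ! (t - 1)) ` {1..i} = set (take i (rev Q))"
    using assms by (intro image_nth_pred_atLeastAtMost) simp
  then show ?thesis by (simp add: take_rev)
qed

lemma forward_prefix: "i \<le> length Q \<Longrightarrow> (\<lambda>t. Q ! (t - 1)) ` {1..i} = set (take i Q)"
  by (rule image_nth_pred_atLeastAtMost)

lemma basis_cyc_window: "k < length Q \<Longrightarrow> basis E indep (cyc_window Q r k)"
  using arrangement_Q mrank_eq unfolding cyclic_arrangement_def by blast

lemma window_eq_cyc_window:
  assumes "k \<in> {1..r-1}"
  shows "(\<lambda>t. rev Q ! (t - 1)) ` {1..r-k} \<union> (\<lambda>t. Q ! (t - 1)) ` {1..k}
    = cyc_window Q r (length Q - r + k)"
proof -
  define n where "n = length Q - r + k"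
  have "r - k \<le> length Q" "k \<le> length Q" "length Q - (r - k) = n" "n < length Q"
    "r + n - length Q = k" "length (drop n Q) \<le> r"
    using assms rank_le_length unfolding n_def by auto
  then show ?thesis unfolding n_def[symmetric]
    using backward_prefix[of "r - k"] forward_prefix[of k]
      cyc_window_conv_drop_take[OF rank_le_length \<open>n < length Q\<close>]
    by simp
qed

sublocale opposite_sequences E indep S r "\<lambda>t. rev Q ! (t - 1)" "\<lambda>t. Q ! (t - 1)"
proof unfold_locales
  have "r - 1 \<le> length Q" using rank_le_length by simp
  then show "inj_on (\<lambda>t. rev Q ! (t - 1)) {1..r-1}" "inj_on (\<lambda>t. Q ! (t - 1)) {1..r-1}"
    using distinct_Q
    by (intro inj_on_nth_pred_atLeastAtMost; simp)+
  show "(\<lambda>t. rev Q ! (t - 1)) ` {1..r-1} \<subseteq> E - S" "(\<lambda>t. Q ! (t - 1)) ` {1..r-1} \<subseteq> E - S"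
    using backward_prefix[OF \<open>r - 1 \<le> length Q\<close>] forward_prefix[OF \<open>r - 1 \<le> length Q\<close>] set_Q
    by (auto dest: in_set_dropD in_set_takeD)
next
  fix k assume k: "k \<in> {1..r-1}"
  have "length Q - r + k < length Q" using k rank_le_length by auto
  then have "basis E indep (cyc_window Q r (length Q - r + k))" by (rule basis_cyc_window)
  then show "indep ((\<lambda>t. rev Q ! (t - 1)) ` {1..r-k} \<union> (\<lambda>t. Q ! (t - 1)) ` {1..k})"
    unfolding window_eq_cyc_window[OF k] basis_def by simp
  show "card ((\<lambda>t. rev Q ! (t - 1)) ` {1..r-k} \<union> (\<lambda>t. Q ! (t - 1)) ` {1..k}) = r"
    unfolding window_eq_cyc_window[OF k] using distinct_Q rank_le_length by (rule card_cyc_window)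
qed

lemma length_eq_rank: "distinct ps \<Longrightarrow> set ps = S \<Longrightarrow> length ps = r"
  using distinct_card card_S by metis

lemma indep_window_head:
  assumes ps: "distinct ps" "set ps = S" and k: "1 \<le> k" "k < r"
    and D_notin: "set (drop k ps) \<notin> circuit_traces E indep S r (\<lambda>t. Q ! (t - 1))"
  shows "indep (cyc_window (ps @ Q) r k)"
proof -
  have len_ps: "length ps = r" using length_eq_rank[OF ps] .
  define D where "D = set (drop k ps)"
  have D_S: "D \<subseteq> S" unfolding D_def ps(2)[symmetric] by (rule set_drop_subset)
  have "card D = r - k" unfolding D_def using ps(1) len_ps by (simp add: distinct_card)
  then have card_D: "card D \<in> {1..r-1}" and "r - card D = k" using k by auto
  with g.indep_if_notin_circuit_traces[OF D_S card_D D_notin[folded D_def]]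
  have "indep ((\<lambda>t. Q ! (t - 1)) ` {1..k} \<union> D)" by simp
  moreover have "(\<lambda>t. Q ! (t - 1)) ` {1..k} = set (take k Q)"
    using k rank_le_length by (intro forward_prefix) simp
  then have "(\<lambda>t. Q ! (t - 1)) ` {1..k} \<union> D = cyc_window (ps @ Q) r k"
    using k unfolding D_def by (simp add: cyc_window_append_head[OF len_ps rank_le_length] Un_commute)
  ultimately show ?thesis by simp
qed

lemma indep_window_tail:
  assumes ps: "distinct ps" "set ps = S" and k: "length Q < k" "k < r + length Q"
    and D_notin: "set (take (k - length Q) ps) \<notin> circuit_traces E indep S r (\<lambda>t. rev Q ! (t - 1))"
  shows "indep (cyc_window (ps @ Q) r k)"
proof -
  have len_ps: "length ps = r" using length_eq_rank[OF ps] .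
  define D where "D = set (take (k - length Q) ps)"
  have D_S: "D \<subseteq> S" unfolding D_def ps(2)[symmetric] by (rule set_take_subset)
  have "card D = k - length Q" unfolding D_def using ps(1) len_ps k by (simp add: distinct_card)
  then have card_D: "card D \<in> {1..r-1}" using k by auto
  from f.indep_if_notin_circuit_traces[OF D_S card_D D_notin[folded D_def]] \<open>card D = k - length Q\<close>
  have "indep ((\<lambda>t. rev Q ! (t - 1)) ` {1..r - (k - length Q)} \<union> D)" by simp
  moreover have "(\<lambda>t. rev Q ! (t - 1)) ` {1..r - (k - length Q)} = set (drop (k - r) Q)"
  proof -
    have le: "r - (k - length Q) \<le> length Q" and eq: "length Q - (r - (k - length Q)) = k - r"
      using k rank_le_length by auto
    show ?thesis using backward_prefix[OF le] unfolding eq .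
  qed
  ultimately show ?thesis
    using cyc_window_append_tail[OF len_ps rank_le_length] k unfolding D_def by simp
qed

lemma cyclic_ordering_if_no_trace_split:
  assumes ps: "distinct ps" "set ps = S"
    and no_split: "\<And>i. i \<in> {1..length ps} \<Longrightarrow>
      set (take i ps) \<notin> circuit_traces E indep S r (\<lambda>t. rev Q ! (t - 1)) \<and>
      set (drop (i - 1) ps) \<notin> circuit_traces E indep S r (\<lambda>t. Q ! (t - 1))"
  shows "cyclic_ordering E indep (ps @ Q)"
proof -
  have len_ps: "length ps = r" using length_eq_rank[OF ps] .
  have window_indep: "indep (cyc_window (ps @ Q) r k)" if k: "k < r + length Q" for k
  proof -
    consider "k = 0" | "1 \<le> k" "k < r" | "r \<le> k" "k \<le> length Q" | "length Q < k"
      by linarith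
    then show ?thesis
    proof cases
      case 1
      then show ?thesis
        using cyc_window_append_head[OF len_ps rank_le_length] ps(2) indep_S by simp
    next
      case 2
      then have "Suc k \<in> {1..length ps}" using len_ps by simp
      from no_split[OF this] show ?thesis using indep_window_head[OF ps 2] by simp
    next
      case 3
      then have "basis E indep (cyc_window Q r (k - r))" using k by (intro basis_cyc_window) auto
      then show ?thesis using cyc_window_append_middle[OF len_ps 3 k] unfolding basis_def by simp
    next
      case 4
      then have "k - length Q \<in> {1..length ps}" using k len_ps by auto
      from no_split[OF this] show ?thesis using indep_window_tail[OF ps 4 k] by simp
    qed
  qed
  show ?thesis
    unfolding cyclic_ordering_def cyclic_arrangement_def mrank_eq
  proof (intro conjI allI impI)
    show "set (ps @ Q) = E" using ps(2) set_Q S_subset by auto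
    show "distinct (ps @ Q)" using ps distinct_Q set_Q by auto
    fix k assume "k < length (ps @ Q)"
    then have "indep (cyc_window (ps @ Q) r k)" using window_indep len_ps by simp
    moreover have "cyc_window (ps @ Q) r k \<subseteq> E"
      using cyc_window_subset[of r "ps @ Q"] len_ps ps(2) set_Q S_subset by auto
    moreover have "card (cyc_window (ps @ Q) r k) = r"
      using card_cyc_window[of "ps @ Q" r] len_ps ps distinct_Q set_Q by auto
    ultimately show "basis E indep (cyc_window (ps @ Q) r k)"
      using basis_if_card_mrank[OF matroid] mrank_eq by metis
  qed
qed

lemma order_consistent_circuit_traces:
  assumes "\<And>ps. distinct ps \<Longrightarrow> set ps = S \<Longrightarrow> \<not> cyclic_ordering E indep (ps @ Q)"
  shows "order_consistent S (circuit_traces E indep S r (\<lambda>t. rev Q ! (t - 1)))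
    (circuit_traces E indep S r (\<lambda>t. Q ! (t - 1)))"
  unfolding order_consistent_def
proof (intro allI impI)
  fix ps assume ps: "distinct ps \<and> set ps = S"
  show "\<exists>i\<in>{1..length ps}. set (take i ps) \<in> circuit_traces E indep S r (\<lambda>t. rev Q ! (t - 1)) \<or>
      set (drop (i - 1) ps) \<in> circuit_traces E indep S r (\<lambda>t. Q ! (t - 1))"
  proof (rule ccontr)
    assume "\<not> ?thesis"
    then have "cyclic_ordering E indep (ps @ Q)"
      using ps by (intro cyclic_ordering_if_no_trace_split) auto
    with ps assms show False by blast
  qed
qed

end

theorem mainTheorem10:
  fixes E :: "'a set" and indep :: "'a set \<Rightarrow> bool" and S :: "'a set"
    and es :: "'a list" and r j :: nat
  assumes "paving E indep"
    and "mrank E indep = r" and "r \<ge> 3"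
    and "basis E indep S" and "card S = r"
    and "set es = E - S" and "length es \<ge> r"
    and "cyclic_arrangement E indep es"
    and "\<forall>i\<in>{1..length es}. \<forall>ps. distinct ps \<and> set ps = S \<longrightarrow>
            \<not> cyclic_ordering E indep (take i es @ ps @ drop i es)"
    and "j \<in> {1..length es}"
  defines "x \<equiv> \<lambda>t::nat. cyc_nth es (int j - int t)"
    and "y \<equiv> \<lambda>t::nat. cyc_nth es (int j + int t - 1)"
  defines "H1 \<equiv> {C \<inter> S | C. circuit E indep C \<and> card C = r \<and>
              (\<exists>i\<in>{1..r-1}. x ` {1..i} \<subset> C \<and> C \<subseteq> x ` {1..i} \<union> S)}"
    and "H2 \<equiv> {C \<inter> S | C. circuit E indep C \<and> card C = r \<and>
              (\<exists>i\<in>{1..r-1}. y ` {1..i} \<subset> C \<and> C \<subseteq> y ` {1..i} \<union> S)}"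
  shows "S_pair S H1 H2 \<and> order_consistent S H1 H2"
proof -
  define Q where "Q = rotate (j - 1) es"
  interpret cyclic_frame E indep S r Q
  proof
    show "cyclic_arrangement E indep Q"
      unfolding Q_def using assms(2,7,8) by (simp add: cyclic_arrangement_rotate)
  qed (use assms(1-7) in \<open>simp_all add: Q_def\<close>)
  have x_eq: "x t = rev Q ! (t - 1)" and y_eq: "y t = Q ! (t - 1)" if "t \<in> {1..r-1}" for t
    using that assms(7,10) cyc_nth_backward[of j t es] cyc_nth_forward[of j t es]
    unfolding x_def y_def Q_def by auto
  have "H1 = circuit_traces E indep S r (\<lambda>t. rev Q ! (t - 1))"
    unfolding H1_def circuit_traces_def[symmetric] by (rule circuit_traces_cong) (rule x_eq)
  moreover have "H2 = circuit_traces E indep S r (\<lambda>t. Q ! (t - 1))"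
    unfolding H2_def circuit_traces_def[symmetric] by (rule circuit_traces_cong) (rule y_eq)
  moreover have "\<not> cyclic_ordering E indep (ps @ Q)" if "distinct ps" "set ps = S" for ps
  proof
    assume "cyclic_ordering E indep (ps @ Q)"
    moreover obtain i n where "i \<in> {1..length es}" "take i es @ ps @ drop i es = rotate n (ps @ Q)"
      using exists_insertion_eq_rotate[of j es ps] assms(10) unfolding Q_def by auto
    moreover have "mrank E indep \<le> length (ps @ Q)" using assms(2) rank_le_length by simp
    ultimately show False
      using assms(9) that cyclic_ordering_rotate by metis
  qed
  ultimately show ?thesis
    using S_pair_circuit_traces order_consistent_circuit_traces by simp
qed

end
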